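(* Let $g:\mathbb{R}\to\mathbb{R}$ be semi-convex (on $\mathbb{R}$) with a modulus $\omega$ such that $$\int_0^1\frac{\omega(t)}{t}\,dt<\infty.$$ Then there exists a separately convex function $f:\mathbb{R}^2\to\mathbb{R}$ such that $f(u,u)=g(u)$ for each $u\in\mathbb{R}$.
   Context: A function $f:\mathbb{R}^d\to\mathbb{R}$ is called separately convex if it is convex on every line parallel to a coordinate axis. A modulus is a non-decreasing function $\omega:[0,\infty)\to[0,\infty)$ with $\lim_{t\to0+}\omega(t)=0$. For a convex set $M$, a real function $g$ defined on a superset of $M$ is semi-convex with modulus $\omega$ on $M$ if $$g(\alpha x+(1-\alpha)y)\le \alpha g(x)+(1-\alpha)g(y)+\alpha(1-\alpha)\|x-y\|\,\omega(\|x-y\|)$$ for all $x,y\in M$ and all $\alpha\in(0,1)$. *)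

theory Defs
  imports "HOL-Analysis.Analysis"
begin

text \<open>A modulus: a non-decreasing function from [0,inf) to [0,inf) tending to 0 at 0+.
  Only its values on [0,inf) matter.\<close>
definition modulus :: "(real \<Rightarrow> real) \<Rightarrow> bool" where
  "modulus \<omega> \<longleftrightarrow> mono_on {0..} \<omega> \<and> (\<forall>t\<ge>0. \<omega> t \<ge> 0) \<and> (\<omega> \<longlongrightarrow> 0) (at_right 0)"

definition semiconvex_on :: "'a::real_normed_vector set \<Rightarrow> ('a \<Rightarrow> real) \<Rightarrow> (real \<Rightarrow> real) \<Rightarrow> bool" where
  "semiconvex_on M g \<omega> \<longleftrightarrow>
     (\<forall>x\<in>M. \<forall>y\<in>M. \<forall>\<alpha>::real. 0 < \<alpha> \<and> \<alpha> < 1 \<longrightarrow>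
        g (\<alpha> *\<^sub>R x + (1 - \<alpha>) *\<^sub>R y) \<le> \<alpha> * g x + (1 - \<alpha>) * g y
          + \<alpha> * (1 - \<alpha>) * norm (x - y) * \<omega> (norm (x - y)))"

definition separately_convex :: "('a::euclidean_space \<Rightarrow> real) \<Rightarrow> bool" where
  "separately_convex f \<longleftrightarrow> (\<forall>x. \<forall>b\<in>Basis. convex_on UNIV (\<lambda>t::real. f (x + t *\<^sub>R b)))"

end

theory Submission
  imports Defs
begin

text \<open>Semi-convexity gives at every point u an almost supporting slope p(u):
  g(u + v) \<ge> g(u) + v p(u) - \<psi>(v), with \<psi>(v) = |v| \<omega>(2|v|) near 0 and \<psi> of at most
  quadratic growth. The Dini condition, in the discrete form \<Sum> \<omega>(2^-k) < \<infinity>, yields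
  separately convex kernels K_N with K_N(v,v) \<le> -\<psi>(v), K_N(0,0) \<longrightarrow> 0 and
  K_N(a,b) \<le> -C a b + L |a - b|: dyadic sums of truncations of the separately affine
  function -a b to squares [-r,r]^2. Then
  f(x,y) = sup over u, N of g(u) + p(u) ((x + y)/2 - u) + K_N(x - u, y - u)
  is a bounded supremum of separately convex functions, lies below g on the diagonal,
  and reaches g(u) at (u,u) as N \<longrightarrow> \<infinity>.\<close>

section \<open>Convexity toolkit\<close>

lemma convex_on_affine: "convex_on A (\<lambda>x::real. a + b * x) \<longleftrightarrow> convex A"
proof
  assume "convex A"
  then show "convex_on A (\<lambda>x::real. a + b * x)"
    by (intro convex_onI) (simp_all add: algebra_simps)
qed (rule convex_on_imp_convex)

lemma convex_on_translate:
  fixes f :: "'a::real_vector \<Rightarrow> real"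
  assumes "convex_on UNIV f"
  shows "convex_on UNIV (\<lambda>x. f (c + x))"
proof (rule convex_onI)
  fix u :: real and x y :: 'a
  assume "0 < u" "u < 1"
  have "c + ((1 - u) *\<^sub>R x + u *\<^sub>R y) = (1 - u) *\<^sub>R (c + x) + u *\<^sub>R (c + y)"
    by (simp add: algebra_simps)
  then show "f (c + ((1 - u) *\<^sub>R x + u *\<^sub>R y)) \<le> (1 - u) * f (c + x) + u * f (c + y)"
    using convex_onD[OF assms, of u "c + x" "c + y"] \<open>0 < u\<close> \<open>u < 1\<close> by simp
qed simp

lemma convex_on_max:
  assumes "convex_on A f" "convex_on A g"
  shows "convex_on A (\<lambda>x. max (f x) (g x))"
proof (rule convex_onI)
  fix t :: real and x y assume t: "0 < t" "t < 1" and xy: "x \<in> A" "y \<in> A"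
  have "f ((1 - t) *\<^sub>R x + t *\<^sub>R y) \<le> (1 - t) * max (f x) (g x) + t * max (f y) (g y)"
    using convex_onD[OF assms(1), of t x y] t xy
    by (smt (verit) max.cobounded1 mult_left_mono)
  moreover have "g ((1 - t) *\<^sub>R x + t *\<^sub>R y) \<le> (1 - t) * max (f x) (g x) + t * max (f y) (g y)"
    using convex_onD[OF assms(2), of t x y] t xy
    by (smt (verit) max.cobounded2 mult_left_mono)
  ultimately show "max (f ((1 - t) *\<^sub>R x + t *\<^sub>R y)) (g ((1 - t) *\<^sub>R x + t *\<^sub>R y))
      \<le> (1 - t) * max (f x) (g x) + t * max (f y) (g y)" by simp
qed (use assms convex_on_imp_convex in blast)

lemma convex_on_sum_fun:
  assumes "finite I" "convex A" "\<And>i. i \<in> I \<Longrightarrow> convex_on A (f i)"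
  shows "convex_on A (\<lambda>x. \<Sum>i\<in>I. f i x)"
  using assms by (induction I rule: finite_induct) (auto simp: convex_on_const)

lemma convex_on_SUP:
  assumes "I \<noteq> {}" "convex A" "\<And>i. i \<in> I \<Longrightarrow> convex_on A (f i)"
    and "\<And>x. x \<in> A \<Longrightarrow> bdd_above ((\<lambda>i. f i x) ` I)"
  shows "convex_on A (\<lambda>x. SUP i\<in>I. f i x)"
proof (rule convex_onI)
  fix t :: real and x y assume t: "0 < t" "t < 1" and xy: "x \<in> A" "y \<in> A"
  show "(SUP i\<in>I. f i ((1 - t) *\<^sub>R x + t *\<^sub>R y)) \<le> (1 - t) * (SUP i\<in>I. f i x) + t * (SUP i\<in>I. f i y)"
  proof (rule cSUP_least[OF assms(1)])
    fix i assume i: "i \<in> I"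
    have "f i ((1 - t) *\<^sub>R x + t *\<^sub>R y) \<le> (1 - t) * f i x + t * f i y"
      using convex_onD[OF assms(3)[OF i], of t x y] t xy by simp
    also have "\<dots> \<le> (1 - t) * (SUP i\<in>I. f i x) + t * (SUP i\<in>I. f i y)"
      using t i xy by (intro add_mono mult_left_mono cSUP_upper assms(4)) auto
    finally show "f i ((1 - t) *\<^sub>R x + t *\<^sub>R y) \<le> \<dots>" .
  qed
qed (rule assms(2))

lemma separately_convex_pairI:
  fixes f :: "real \<times> real \<Rightarrow> real"
  assumes "\<And>y. convex_on UNIV (\<lambda>x. f (x, y))" and "\<And>x. convex_on UNIV (\<lambda>y. f (x, y))"
  shows "separately_convex f"
  unfolding separately_convex_def
proof (intro allI ballI)
  fix z b :: "real \<times> real"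
  assume "b \<in> Basis"
  then consider "b = (1, 0)" | "b = (0, 1)" by (auto simp: Basis_prod_def)
  then show "convex_on UNIV (\<lambda>t. f (z + t *\<^sub>R b))"
  proof cases
    case 1
    then show ?thesis
      using convex_on_translate[OF assms(1), of "fst z" "snd z"] by (cases z) simp
  next
    case 2
    then show ?thesis
      using convex_on_translate[OF assms(2), of "fst z" "snd z"] by (cases z) simp
  qed
qed

section \<open>Truncated products\<close>

definition trunc_prod :: "real \<Rightarrow> real \<Rightarrow> real \<Rightarrow> real" where
  "trunc_prod r a b = (if \<bar>a\<bar> \<le> r \<and> \<bar>b\<bar> \<le> r then - (a * b) else r * \<bar>a - b\<bar> - r\<^sup>2)"

lemma trunc_prod_commute: "trunc_prod r a b = trunc_prod r b a"
  unfolding trunc_prod_def by (auto simp: abs_minus_commute mult.commute)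

lemma trunc_prod_eq_max:
  assumes "\<bar>b\<bar> \<le> r"
  shows "trunc_prod r a b = max (- (a * b)) (r * \<bar>a - b\<bar> - r\<^sup>2)"
proof (cases "\<bar>a\<bar> \<le> r")
  case True
  have "0 \<le> (r - b) * (r + a)" "0 \<le> (r - a) * (r + b)"
    using True assms by (auto intro: mult_nonneg_nonneg)
  then have "r * \<bar>a - b\<bar> - r\<^sup>2 \<le> - (a * b)"
    by (auto simp: abs_if algebra_simps power2_eq_square)
  then show ?thesis using True assms unfolding trunc_prod_def by simp
next
  case False
  consider "r < a" | "a < - r" using False by linarith
  then have "- (a * b) \<le> r * \<bar>a - b\<bar> - r\<^sup>2"
  proof cases
    case 1
    then have "0 \<le> (a - r) * (r + b)" using assms by (intro mult_nonneg_nonneg) auto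
    moreover have "\<bar>a - b\<bar> = a - b" using 1 assms by simp
    ultimately show ?thesis by (simp add: algebra_simps power2_eq_square)
  next
    case 2
    then have "0 \<le> (- a - r) * (r - b)" using assms by (intro mult_nonneg_nonneg) auto
    moreover have "\<bar>a - b\<bar> = b - a" using 2 assms by simp
    ultimately show ?thesis by (simp add: algebra_simps power2_eq_square)
  qed
  then show ?thesis using False unfolding trunc_prod_def by simp
qed

lemma convex_trunc_prod:
  assumes "0 \<le> r"
  shows "convex_on UNIV (\<lambda>a. trunc_prod r a b)"
proof -
  have "convex_on UNIV (\<lambda>a. r * dist b a + - r\<^sup>2)"
    by (intro convex_on_add convex_on_cmul assms convex_on_dist) (simp_all add: convex_on_const)
  then have dist: "convex_on UNIV (\<lambda>a. r * \<bar>a - b\<bar> - r\<^sup>2)"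
    by (simp add: dist_real_def abs_minus_commute)
  show ?thesis
  proof (cases "\<bar>b\<bar> \<le> r")
    case True
    have "convex_on UNIV (\<lambda>a. - (a * b))"
      using convex_on_affine[of UNIV 0 "- b"] by (simp add: mult.commute)
    then show ?thesis
      unfolding trunc_prod_eq_max[OF True] by (intro convex_on_max dist)
  next
    case False
    then show ?thesis using dist unfolding trunc_prod_def by simp
  qed
qed

lemma trunc_prod_le:
  assumes "0 \<le> r"
  shows "trunc_prod r a b \<le> r * \<bar>a - b\<bar>"
proof (cases "\<bar>a\<bar> \<le> r \<and> \<bar>b\<bar> \<le> r")
  case True
  show ?thesis
  proof (cases "0 \<le> a * b")
    case True
    moreover have "0 \<le> r * \<bar>a - b\<bar>" using assms by simp
    ultimately show ?thesis
      using \<open>\<bar>a\<bar> \<le> r \<and> \<bar>b\<bar> \<le> r\<close> unfolding trunc_prod_def by simp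
  next
    case False
    then have "0 < a \<and> b < 0 \<or> a < 0 \<and> 0 < b"
      by (simp add: not_le mult_less_0_iff)
    then have "\<bar>b\<bar> \<le> \<bar>a - b\<bar>" "- (a * b) = \<bar>a\<bar> * \<bar>b\<bar>"
      by (auto simp: abs_if)
    moreover have "\<bar>a\<bar> * \<bar>b\<bar> \<le> r * \<bar>b\<bar>"
      using True by (simp add: mult_right_mono)
    ultimately show ?thesis
      using True assms unfolding trunc_prod_def by (smt (verit) mult_left_mono)
  qed
qed (use assms in \<open>auto simp: trunc_prod_def\<close>)

lemma trunc_prod_diag_nonpos: "0 \<le> r \<Longrightarrow> trunc_prod r v v \<le> 0"
  unfolding trunc_prod_def by auto

lemma trunc_prod_diag: "\<bar>v\<bar> \<le> r \<Longrightarrow> trunc_prod r v v = - v\<^sup>2"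
  unfolding trunc_prod_def by (simp add: power2_eq_square)

section \<open>Almost supporting slopes of semi-convex functions\<close>

lemma modulus_nonneg: "modulus \<omega> \<Longrightarrow> 0 \<le> t \<Longrightarrow> 0 \<le> \<omega> t"
  unfolding modulus_def by auto

lemma modulus_mono: "modulus \<omega> \<Longrightarrow> 0 \<le> s \<Longrightarrow> s \<le> t \<Longrightarrow> \<omega> s \<le> \<omega> t"
  unfolding modulus_def by (auto intro: mono_onD)

text \<open>Below 1/2 this is the error of slope_support; beyond, the quadratic error of
  support_quadratic, which the term -3 \<omega>(2) a b of the kernel absorbs.\<close>
definition defect :: "(real \<Rightarrow> real) \<Rightarrow> real \<Rightarrow> real" where
  "defect \<omega> v = (if \<bar>v\<bar> < 1/2 then \<bar>v\<bar> * \<omega> (2 * \<bar>v\<bar>) else 3 * \<omega> 2 * v\<^sup>2)"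

lemma defect_le:
  assumes "modulus \<omega>"
  shows "defect \<omega> v \<le> 3 * \<omega> 2 * v\<^sup>2 + \<omega> 2"
proof (cases "\<bar>v\<bar> < 1/2")
  case True
  have "\<bar>v\<bar> * \<omega> (2 * \<bar>v\<bar>) \<le> 1 * \<omega> 2"
    using True modulus_mono[OF assms, of "2 * \<bar>v\<bar>" 2] modulus_nonneg[OF assms, of "2 * \<bar>v\<bar>"]
    by (intro mult_mono) auto
  moreover have "0 \<le> 3 * \<omega> 2 * v\<^sup>2" using modulus_nonneg[OF assms, of 2] by simp
  ultimately show ?thesis
    using True unfolding defect_def by simp
qed (use modulus_nonneg[OF assms, of 2] in \<open>simp add: defect_def\<close>)

locale semiconvex_fun =
  fixes g \<omega> :: "real \<Rightarrow> real"
  assumes modulus: "modulus \<omega>" and semiconvex: "semiconvex_on UNIV g \<omega>"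
begin

lemma difference_quotients_le:
  assumes s: "0 < s" and t: "0 < t"
  shows "(g u - g (u - t)) / t \<le> (g (u + s) - g u) / s + \<omega> (s + t)"
proof -
  define \<alpha> where "\<alpha> = t / (s + t)"
  have \<alpha>: "0 < \<alpha>" "\<alpha> < 1" using s t by (auto simp: \<alpha>_def field_simps)
  have scaled: "(s + t) * \<alpha> = t" "(s + t) * (1 - \<alpha>) = s"
    using s t by (simp_all add: \<alpha>_def field_simps)
  then have "\<alpha> * s = (1 - \<alpha>) * t" by (simp add: algebra_simps)
  then have "\<alpha> *\<^sub>R (u + s) + (1 - \<alpha>) *\<^sub>R (u - t) = u"
    by (simp add: algebra_simps)
  moreover have "norm ((u + s) - (u - t)) = s + t" using s t by simp
  ultimately have "g u \<le> \<alpha> * g (u + s) + (1 - \<alpha>) * g (u - t) + \<alpha> * (1 - \<alpha>) * (s + t) * \<omega> (s + t)"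
    using semiconvex \<alpha> unfolding semiconvex_on_def by (metis UNIV_I)
  then have "(s + t) * g u \<le> (s + t) * (\<alpha> * g (u + s) + (1 - \<alpha>) * g (u - t)
      + \<alpha> * (1 - \<alpha>) * (s + t) * \<omega> (s + t))"
    using s t by (intro mult_left_mono) auto
  also have "\<dots> = ((s + t) * \<alpha>) * g (u + s) + ((s + t) * (1 - \<alpha>)) * g (u - t)
      + ((s + t) * \<alpha>) * ((s + t) * (1 - \<alpha>)) * \<omega> (s + t)"
    by (simp add: algebra_simps)
  also have "\<dots> = t * g (u + s) + s * g (u - t) + t * s * \<omega> (s + t)"
    by (simp only: scaled)
  finally show ?thesis
    using s t by (simp add: field_simps)
qed


lemma difference_quotients_le_modulus:
  assumes s: "0 < s" and t: "0 < t"
  shows "(g u - g (u - t)) / t - \<omega> (2 * t) \<le> (g (u + s) - g u) / s + \<omega> (2 * s)"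
proof -
  have "\<omega> (s + t) \<le> \<omega> (2 * max s t)"
    using modulus_mono[OF modulus, of "s + t" "2 * max s t"] s t by simp
  also have "\<dots> \<le> \<omega> (2 * s) + \<omega> (2 * t)"
    using modulus_nonneg[OF modulus, of "2 * s"] modulus_nonneg[OF modulus, of "2 * t"] s t
    by (simp add: max_def)
  finally have "\<omega> (s + t) \<le> \<omega> (2 * s) + \<omega> (2 * t)" .
  then show ?thesis using difference_quotients_le[OF s t, of u] by linarith
qed

definition slope :: "real \<Rightarrow> real" where
  "slope u = (SUP t\<in>{0<..}. (g u - g (u - t)) / t - \<omega> (2 * t))"

lemma slope_le: "0 < s \<Longrightarrow> slope u \<le> (g (u + s) - g u) / s + \<omega> (2 * s)"
  unfolding slope_def by (rule cSUP_least) (auto intro: difference_quotients_le_modulus)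

lemma le_slope: "0 < t \<Longrightarrow> (g u - g (u - t)) / t - \<omega> (2 * t) \<le> slope u"
  unfolding slope_def
  by (rule cSUP_upper) (auto intro!: bdd_aboveI2 difference_quotients_le_modulus[of 1])

lemma slope_support: "g u + v * slope u - \<bar>v\<bar> * \<omega> (2 * \<bar>v\<bar>) \<le> g (u + v)"
proof (cases v "0 :: real" rule: linorder_cases)
  case less
  then show ?thesis using le_slope[of "- v" u] by (simp add: field_simps)
next
  case greater
  then show ?thesis using slope_le[of v u] by (simp add: field_simps)
qed simp

lemma slope_increment: "h * slope u - 2 * \<bar>h\<bar> * \<omega> (2 * \<bar>h\<bar>) \<le> h * slope (u + h)"
proof (cases h "0 :: real" rule: linorder_cases)
  case less
  then show ?thesis
    using le_slope[of "- h" u] slope_le[of "- h" "u + h"] by (simp add: field_simps)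
next
  case greater
  then show ?thesis
    using le_slope[of h "u + h"] slope_le[of h u] by (simp add: field_simps)
qed simp

lemma slope_drift:
  "h * slope u - 2 * real n * \<bar>h\<bar> * \<omega> (2 * \<bar>h\<bar>) \<le> h * slope (u + real n * h)"
proof (induction n)
  case (Suc n)
  then show ?case
    using slope_increment[of h "u + real n * h"] by (simp add: algebra_simps)
qed simp

lemma support_chain:
  "g u + real n * h * slope u - (real n)\<^sup>2 * \<bar>h\<bar> * \<omega> (2 * \<bar>h\<bar>) \<le> g (u + real n * h)"
proof (induction n)
  case (Suc n)
  then show ?case
    using slope_support[of "u + real n * h" h] slope_drift[of h u n]
    by (simp add: algebra_simps power2_eq_square)
qed simp

text \<open>Steps of length at most 1 keep the error quadratic even if \<omega> is unbounded.\<close>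
lemma support_quadratic:
  assumes v: "1/2 \<le> \<bar>v\<bar>"
  shows "g u + v * slope u - 3 * \<omega> 2 * v\<^sup>2 \<le> g (u + v)"
proof -
  define n where "n = nat \<lceil>\<bar>v\<bar>\<rceil>"
  have n: "\<bar>v\<bar> \<le> real n" "real n \<le> 3 * \<bar>v\<bar>"
    using v unfolding n_def by linarith+
  define h where "h = v / real n"
  have "0 < real n" using n v by linarith
  then have nh: "real n * h = v" "real n * \<bar>h\<bar> = \<bar>v\<bar>" and h: "\<bar>h\<bar> \<le> 1"
    using n by (auto simp: h_def abs_divide field_simps)
  have "(real n)\<^sup>2 * \<bar>h\<bar> * \<omega> (2 * \<bar>h\<bar>) = real n * \<bar>v\<bar> * \<omega> (2 * \<bar>h\<bar>)"
    using nh by (simp add: power2_eq_square)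
  also have "\<dots> \<le> (3 * \<bar>v\<bar>) * \<bar>v\<bar> * \<omega> 2"
    using n h modulus_mono[OF modulus, of "2 * \<bar>h\<bar>" 2] modulus_nonneg[OF modulus, of "2 * \<bar>h\<bar>"]
    by (intro mult_mono) auto
  also have "\<dots> = 3 * \<omega> 2 * v\<^sup>2" by (simp add: power2_eq_square)
  finally show ?thesis using support_chain[of u n h] nh by simp
qed

lemma support_defect: "g u + v * slope u - defect \<omega> v \<le> g (u + v)"
  using slope_support[of u v] support_quadratic[of v u] by (simp add: defect_def)

end

section \<open>Dyadic kernels\<close>

locale dini_modulus =
  fixes \<omega> :: "real \<Rightarrow> real"
  assumes modulus: "modulus \<omega>" and summable_dyadic: "summable (\<lambda>k. \<omega> ((1/2)^k))"
begin

definition radius :: "nat \<Rightarrow> real" where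
  "radius k = (1/2) ^ Suc k"

definition weight :: "nat \<Rightarrow> real" where
  "weight k = 4 * \<omega> (2 * radius k) / radius k"

definition dyadic_sum :: "nat \<Rightarrow> real \<Rightarrow> real \<Rightarrow> real" where
  "dyadic_sum N a b = (\<Sum>k\<le>N. weight k * trunc_prod (radius k) a b)"

text \<open>The shift by \<omega>(1) times the radius covers the scales |v| \<le> radius N that the first
  N + 1 terms do not reach; it vanishes as N \<longrightarrow> \<infinity>.\<close>
definition kernel :: "nat \<Rightarrow> real \<Rightarrow> real \<Rightarrow> real" where
  "kernel N a b = - 3 * \<omega> 2 * a * b + dyadic_sum N a b - \<omega> 1 * radius N"

lemma radius_pos: "0 < radius k"
  by (simp add: radius_def)

lemma radius_le_half: "radius k \<le> 1/2"
  by (simp add: radius_def power_le_one)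

lemma weight_nonneg: "0 \<le> weight k"
  using radius_pos[of k] modulus_nonneg[OF modulus, of "2 * radius k"] by (simp add: weight_def)

lemma weight_radius: "weight k * radius k = 4 * \<omega> ((1/2) ^ k)"
  using radius_pos[of k] by (simp add: weight_def radius_def)

lemma weighted_trunc_prod_diag_nonpos: "weight k * trunc_prod (radius k) v v \<le> 0"
  using weight_nonneg trunc_prod_diag_nonpos[OF less_imp_le[OF radius_pos]]
  by (rule mult_nonneg_nonpos)

lemma dyadic_sum_le: "dyadic_sum N a b \<le> 4 * (\<Sum>k. \<omega> ((1/2) ^ k)) * \<bar>a - b\<bar>"
proof -
  have "dyadic_sum N a b \<le> (\<Sum>k\<le>N. weight k * (radius k * \<bar>a - b\<bar>))"
    unfolding dyadic_sum_def
    by (intro sum_mono mult_left_mono trunc_prod_le weight_nonneg less_imp_le[OF radius_pos])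
  also have "\<dots> = 4 * (\<Sum>k\<le>N. \<omega> ((1/2) ^ k)) * \<bar>a - b\<bar>"
    by (simp add: sum_distrib_left sum_distrib_right weight_radius[symmetric] mult.assoc)
  also have "\<dots> \<le> 4 * (\<Sum>k. \<omega> ((1/2) ^ k)) * \<bar>a - b\<bar>"
    using sum_le_suminf[OF summable_dyadic, of "{..N}"] modulus_nonneg[OF modulus]
    by (intro mult_right_mono) auto
  finally show ?thesis .
qed

lemma dyadic_sum_diag_nonpos: "dyadic_sum N v v \<le> 0"
  unfolding dyadic_sum_def by (intro sum_nonpos weighted_trunc_prod_diag_nonpos)

lemma dyadic_sum_diag_le_term:
  assumes "k \<le> N"
  shows "dyadic_sum N v v \<le> weight k * trunc_prod (radius k) v v"
proof -
  have "- (weight k * trunc_prod (radius k) v v) \<le> (\<Sum>j\<le>N. - (weight j * trunc_prod (radius j) v v))"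
    using assms weighted_trunc_prod_diag_nonpos by (intro member_le_sum) auto
  then show ?thesis by (simp add: dyadic_sum_def sum_negf)
qed

lemma dyadic_term_diag:
  assumes "radius (Suc k) < \<bar>v\<bar>" "\<bar>v\<bar> \<le> radius k"
  shows "weight k * trunc_prod (radius k) v v \<le> - (\<bar>v\<bar> * \<omega> (2 * \<bar>v\<bar>))"
proof -
  have "(radius k / 2)\<^sup>2 \<le> \<bar>v\<bar>\<^sup>2"
    using assms(1) radius_pos[of k] by (intro power_mono) (auto simp: radius_def)
  then have "(radius k / 2)\<^sup>2 \<le> v\<^sup>2" by simp
  then have "weight k * (radius k / 2)\<^sup>2 \<le> weight k * v\<^sup>2"
    by (intro mult_left_mono weight_nonneg)
  moreover have "weight k * (radius k / 2)\<^sup>2 = radius k * \<omega> (2 * radius k)"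
    using radius_pos[of k] by (simp add: weight_def power2_eq_square)
  moreover have "\<bar>v\<bar> * \<omega> (2 * \<bar>v\<bar>) \<le> radius k * \<omega> (2 * radius k)"
    using assms modulus_mono[OF modulus, of "2 * \<bar>v\<bar>" "2 * radius k"]
      modulus_nonneg[OF modulus, of "2 * \<bar>v\<bar>"]
    by (intro mult_mono) auto
  ultimately show ?thesis using trunc_prod_diag[OF assms(2)] by simp
qed

lemma dyadic_sum_diag:
  "radius N < \<bar>v\<bar> \<Longrightarrow> \<bar>v\<bar> < 1/2 \<Longrightarrow> dyadic_sum N v v \<le> - (\<bar>v\<bar> * \<omega> (2 * \<bar>v\<bar>))"
proof (induction N)
  case 0
  then show ?case by (simp add: radius_def)
next
  case (Suc N)
  show ?case
  proof (cases "radius N < \<bar>v\<bar>")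
    case True
    then show ?thesis
      using Suc weighted_trunc_prod_diag_nonpos[of "Suc N" v] by (simp add: dyadic_sum_def)
  next
    case False
    then show ?thesis
      using dyadic_sum_diag_le_term[of N "Suc N" v] dyadic_term_diag[of N v] Suc.prems(1) by simp
  qed
qed

lemma kernel_diag: "kernel N v v \<le> - defect \<omega> v"
proof -
  have nonneg: "0 \<le> 3 * \<omega> 2 * v\<^sup>2" "0 \<le> \<omega> 1 * radius N"
    using modulus_nonneg[OF modulus] radius_pos[of N] by simp_all
  have kernel: "kernel N v v = - (3 * \<omega> 2 * v\<^sup>2) + dyadic_sum N v v - \<omega> 1 * radius N"
    by (simp add: kernel_def power2_eq_square)
  consider "1/2 \<le> \<bar>v\<bar>" | "\<bar>v\<bar> < 1/2" "\<bar>v\<bar> \<le> radius N" | "radius N < \<bar>v\<bar>" "\<bar>v\<bar> < 1/2"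
    by linarith
  then show ?thesis
  proof cases
    case 1
    then show ?thesis using kernel nonneg dyadic_sum_diag_nonpos[of N v] by (simp add: defect_def)
  next
    case 2
    have "\<bar>v\<bar> * \<omega> (2 * \<bar>v\<bar>) \<le> radius N * \<omega> 1"
      using 2 radius_le_half[of N] modulus_mono[OF modulus, of "2 * \<bar>v\<bar>" 1]
        modulus_nonneg[OF modulus, of "2 * \<bar>v\<bar>"]
      by (intro mult_mono) auto
    moreover have "defect \<omega> v = \<bar>v\<bar> * \<omega> (2 * \<bar>v\<bar>)"
      using 2 by (simp add: defect_def)
    ultimately show ?thesis
      using kernel nonneg dyadic_sum_diag_nonpos[of N v] mult.commute[of "radius N" "\<omega> 1"] by linarith
  next
    case 3
    then show ?thesis using kernel nonneg dyadic_sum_diag[of N v] by (simp add: defect_def)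
  qed
qed

lemma kernel_zero: "kernel N 0 0 = - \<omega> 1 * radius N"
  using radius_pos by (simp add: kernel_def dyadic_sum_def trunc_prod_def less_imp_le)

lemma kernel_le: "kernel N a b \<le> - 3 * \<omega> 2 * a * b + 4 * (\<Sum>k. \<omega> ((1/2) ^ k)) * \<bar>a - b\<bar>"
  using dyadic_sum_le[of N a b] mult_nonneg_nonneg[OF modulus_nonneg[OF modulus, of 1] less_imp_le[OF radius_pos[of N]]]
  unfolding kernel_def by simp

lemma kernel_commute: "kernel N a b = kernel N b a"
  by (simp add: kernel_def dyadic_sum_def trunc_prod_commute[of _ a b] mult.commute)

lemma convex_kernel: "convex_on UNIV (\<lambda>a. kernel N a b)"
proof -
  have affine: "convex_on UNIV (\<lambda>a. - \<omega> 1 * radius N + (- 3 * \<omega> 2 * b) * a)"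
    by (rule convex_on_affine[THEN iffD2]) simp
  have sum: "convex_on UNIV (\<lambda>a. dyadic_sum N a b)"
    unfolding dyadic_sum_def
    by (intro convex_on_sum_fun convex_on_cmul weight_nonneg convex_trunc_prod
        less_imp_le[OF radius_pos]) simp_all
  from convex_on_add[OF affine sum] show ?thesis
    by (simp add: kernel_def algebra_simps)
qed

end

section \<open>The Dini condition\<close>

definition dyadic_interval :: "nat \<Rightarrow> real set" where
  "dyadic_interval k = {(1/2) ^ Suc k <..< (1/2) ^ k}"

lemma disjoint_family_dyadic_interval: "disjoint_family dyadic_interval"
  unfolding disjoint_family_on_def
proof (intro ballI impI)
  fix j k :: nat assume "j \<noteq> k"
  then have "(1/2::real) ^ max j k \<le> (1/2) ^ Suc (min j k)"
    by (intro power_decreasing) auto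
  then show "dyadic_interval j \<inter> dyadic_interval k = {}"
    by (auto simp: dyadic_interval_def max_def min_def split: if_splits)
qed

lemma dyadic_interval_subset: "dyadic_interval k \<subseteq> {0<..<1}"
proof -
  have "(1/2::real) ^ k \<le> 1" by (simp add: power_le_one)
  then show ?thesis by (auto simp: dyadic_interval_def)
qed

lemma emeasure_dyadic_interval: "emeasure lborel (dyadic_interval k) = ennreal ((1/2) ^ Suc k)"
  unfolding dyadic_interval_def by (subst emeasure_lborel_Ioo) (simp_all add: power_decreasing)

text \<open>Comparing with a step function avoids any measurability question for \<omega>.\<close>
lemma modulus_dyadic_step_le:
  assumes "modulus \<omega>"
  shows "(\<Sum>k<N. ennreal (\<omega> ((1/2) ^ Suc k) / (1/2) ^ k) * indicator (dyadic_interval k) t)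
    \<le> ennreal (\<omega> t / t) * indicator {0<..<1} t"
proof (cases "\<exists>k<N. t \<in> dyadic_interval k")
  case True
  then obtain k where k: "k < N" "t \<in> dyadic_interval k" by blast
  have "(\<Sum>k<N. ennreal (\<omega> ((1/2) ^ Suc k) / (1/2) ^ k) * indicator (dyadic_interval k) t)
      = ennreal (\<omega> ((1/2) ^ Suc k) / (1/2) ^ k)"
    using k by (intro sum_indicator_disjoint_family disjoint_family_on_mono[OF _ disjoint_family_dyadic_interval]) auto
  also have "\<dots> \<le> ennreal (\<omega> t / t)"
    using k(2) modulus_mono[OF assms, of "(1/2) ^ Suc k" t] modulus_nonneg[OF assms, of t]
    unfolding dyadic_interval_def by (intro ennreal_leI frac_le) auto
  finally show ?thesis using k(2) dyadic_interval_subset[of k] by auto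
next
  case False
  then show ?thesis by (simp add: indicator_def)
qed

lemma dyadic_modulus_sum_le_integral:
  assumes "modulus \<omega>"
  shows "ennreal (\<Sum>k<N. \<omega> ((1/2) ^ Suc k) / 2) \<le> (\<integral>\<^sup>+ t \<in> {0<..<1}. ennreal (\<omega> t / t) \<partial>lborel)"
proof -
  have step_integral: "(\<integral>\<^sup>+ t. ennreal (\<omega> ((1/2) ^ Suc k) / (1/2) ^ k) * indicator (dyadic_interval k) t \<partial>lborel)
      = ennreal (\<omega> ((1/2) ^ Suc k) / 2)" for k
    using modulus_nonneg[OF assms, of "(1/2) ^ Suc k"]
    by (simp add: nn_integral_cmult_indicator emeasure_dyadic_interval dyadic_interval_def
        ennreal_mult[symmetric] field_simps)
  have "ennreal (\<Sum>k<N. \<omega> ((1/2) ^ Suc k) / 2)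
      = (\<Sum>k<N. \<integral>\<^sup>+ t. ennreal (\<omega> ((1/2) ^ Suc k) / (1/2) ^ k) * indicator (dyadic_interval k) t \<partial>lborel)"
    unfolding step_integral using modulus_nonneg[OF assms] by (simp add: sum_ennreal)
  also have "\<dots> = \<integral>\<^sup>+ t. (\<Sum>k<N. ennreal (\<omega> ((1/2) ^ Suc k) / (1/2) ^ k) * indicator (dyadic_interval k) t) \<partial>lborel"
    by (rule nn_integral_sum[symmetric]) (simp add: dyadic_interval_def)
  also have "\<dots> \<le> (\<integral>\<^sup>+ t \<in> {0<..<1}. ennreal (\<omega> t / t) \<partial>lborel)"
    by (intro nn_integral_mono modulus_dyadic_step_le[OF assms])
  finally show ?thesis .
qed

lemma dini_modulus_summable_dyadic:
  assumes "modulus \<omega>" and "(\<integral>\<^sup>+ t \<in> {0<..<1}. ennreal (\<omega> t / t) \<partial>lborel) < \<infinity>"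
  shows "summable (\<lambda>k. \<omega> ((1/2) ^ k))"
proof -
  let ?I = "enn2real (\<integral>\<^sup>+ t \<in> {0<..<1}. ennreal (\<omega> t / t) \<partial>lborel)"
  have "(\<Sum>k<N. \<omega> ((1/2) ^ Suc k) / 2) \<le> ?I" for N
    using enn2real_mono[OF dyadic_modulus_sum_le_integral[OF assms(1), of N]] assms(2)
      modulus_nonneg[OF assms(1)] by (simp add: sum_nonneg)
  then have "summable (\<lambda>k. \<omega> ((1/2) ^ Suc k) / 2)"
    using modulus_nonneg[OF assms(1)] by (intro summableI_nonneg_bounded) auto
  then show ?thesis
    using summable_Suc_iff[of "\<lambda>k. \<omega> ((1/2) ^ k)"] summable_divide_iff[of _ 2] by simp
qed

section \<open>The separately convex extension\<close>

locale semiconvex_dini = semiconvex_fun g \<omega> + dini_modulus \<omega> for g \<omega> :: "real \<Rightarrow> real"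
begin

definition piece :: "real \<Rightarrow> nat \<Rightarrow> real \<Rightarrow> real \<Rightarrow> real" where
  "piece u N x y = g u + slope u * ((x + y) / 2 - u) + kernel N (x - u) (y - u)"

definition extension :: "real \<Rightarrow> real \<Rightarrow> real" where
  "extension x y = (SUP i. piece (fst i) (snd i) x y)"

lemma piece_le:
  "piece u N x y \<le> g ((x + y) / 2) + \<omega> 2 + 3 * \<omega> 2 * (x - y)\<^sup>2 / 4 + 4 * (\<Sum>k. \<omega> ((1/2) ^ k)) * \<bar>x - y\<bar>"
proof -
  define w where "w = (x + y) / 2 - u"
  have support: "g u + slope u * w \<le> g ((x + y) / 2) + 3 * \<omega> 2 * w\<^sup>2 + \<omega> 2"
    using support_defect[of u w] defect_le[OF modulus, of w] by (simp add: w_def mult.commute)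
  have product: "- 3 * \<omega> 2 * (x - u) * (y - u) = - 3 * \<omega> 2 * w\<^sup>2 + 3 * \<omega> 2 * (x - y)\<^sup>2 / 4"
    by (simp add: w_def power2_eq_square field_simps)
  have kernel: "kernel N (x - u) (y - u)
      \<le> - 3 * \<omega> 2 * w\<^sup>2 + 3 * \<omega> 2 * (x - y)\<^sup>2 / 4 + 4 * (\<Sum>k. \<omega> ((1/2) ^ k)) * \<bar>x - y\<bar>"
    using kernel_le[of N "x - u" "y - u"] product by simp
  show ?thesis
    using support kernel unfolding piece_def w_def[symmetric] by linarith
qed

lemma bdd_above_piece: "bdd_above (range (\<lambda>i. piece (fst i) (snd i) x y))"
  using piece_le by (intro bdd_aboveI2) blast

lemma piece_diag_le: "piece u N v v \<le> g v"
  using kernel_diag[of N "v - u"] support_defect[of u "v - u"] by (simp add: piece_def mult.commute)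

lemma piece_self: "piece u N u u = g u - \<omega> 1 * radius N"
  by (simp add: piece_def kernel_zero)

lemma extension_diag: "extension u u = g u"
proof (rule antisym)
  show "extension u u \<le> g u"
    unfolding extension_def by (rule cSUP_least) (auto intro: piece_diag_le)
  have "(\<lambda>N. g u - \<omega> 1 * radius N) \<longlonglongrightarrow> g u - \<omega> 1 * 0"
    unfolding radius_def by (intro tendsto_intros LIMSEQ_Suc LIMSEQ_power_zero) simp
  moreover have "g u - \<omega> 1 * radius N \<le> extension u u" for N
    unfolding extension_def piece_self[symmetric]
    by (rule cSUP_upper[OF _ bdd_above_piece, of "(u, N)", simplified])
  ultimately show "g u \<le> extension u u"
    by (intro LIMSEQ_le_const2) auto
qed

lemma piece_commute: "piece u N x y = piece u N y x"
  by (simp add: piece_def kernel_commute[of N "x - u"] add.commute)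

lemma convex_piece: "convex_on UNIV (\<lambda>x. piece u N x y)"
proof -
  have affine: "convex_on UNIV (\<lambda>x. (g u + slope u * (y / 2 - u)) + (slope u / 2) * x)"
    by (rule convex_on_affine[THEN iffD2]) simp
  have "convex_on UNIV (\<lambda>x. kernel N (- u + x) (y - u))"
    by (rule convex_on_translate[OF convex_kernel])
  from convex_on_add[OF affine this] show ?thesis
    by (simp add: piece_def algebra_simps add_divide_distrib)
qed

lemma separately_convex_extension: "separately_convex (\<lambda>z. extension (fst z) (snd z))"
proof -
  have "convex_on UNIV (\<lambda>y. piece u N x y)" for u N x
    using convex_piece[of u N x] by (simp add: piece_commute[of u N _ x])
  then show ?thesis
    unfolding extension_def
    by (intro separately_convex_pairI convex_on_SUP bdd_above_piece) (simp_all add: convex_piece)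
qed

end

theorem theorem1p2:
  fixes g :: "real \<Rightarrow> real" and \<omega> :: "real \<Rightarrow> real"
  assumes "modulus \<omega>"
    and "semiconvex_on UNIV g \<omega>"
    and "(\<integral>\<^sup>+ t \<in> {0<..<1}. ennreal (\<omega> t / t) \<partial>lborel) < \<infinity>"
  shows "\<exists>f :: real \<times> real \<Rightarrow> real. separately_convex f \<and> (\<forall>u. f (u, u) = g u)"
proof -
  interpret semiconvex_dini g \<omega>
    using assms dini_modulus_summable_dyadic by unfold_locales blast+
  show ?thesis
    using separately_convex_extension extension_diag by fastforce
qed

end
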